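(* Let $D$ be an oriented graph with $n$ vertices containing no transmitter. Then there exists an oriented graph $D_2$ containing $D$ as an induced suboriented graph such that the set of weak kings of $D_2$ is exactly the vertex set of $D$.
   Context: An oriented graph is a digraph with no loops and no pair of symmetric arcs. A transmitter is a vertex of indegree $0$. For vertices $u,v$ write $u(1\text{-}0)v$ if there is an arc from $u$ to $v$, and $u(0\text{-}0)v$ if there is no arc between $u$ and $v$. A vertex $v$ is weakly reachable within two steps from $u$ if $u(1\text{-}0)v$, or $u(0\text{-}0)v$, or for some vertex $w$ one has $u(1\text{-}0)w(1\text{-}0)v$, or $u(1\text{-}0)w(0\text{-}0)v$, or $u(0\text{-}0)w(1\text{-}0)v$. A vertex $u$ of an oriented graph is a weak king if every other vertex is weakly reachable within two steps from $u$. *)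

theory Defs
  imports Main
begin

definition oriented_graph :: "'a set \<Rightarrow> ('a \<times> 'a) set \<Rightarrow> bool" where
  "oriented_graph V A \<longleftrightarrow> finite V \<and> A \<subseteq> V \<times> V \<and> (\<forall>x. (x, x) \<notin> A)
     \<and> (\<forall>x y. (x, y) \<in> A \<longrightarrow> (y, x) \<notin> A)"

definition transmitter :: "'a set \<Rightarrow> ('a \<times> 'a) set \<Rightarrow> 'a \<Rightarrow> bool" where
  "transmitter V A v \<longleftrightarrow> v \<in> V \<and> (\<forall>u\<in>V. (u, v) \<notin> A)"

definition arc10 :: "('a \<times> 'a) set \<Rightarrow> 'a \<Rightarrow> 'a \<Rightarrow> bool" where
  "arc10 A u v \<longleftrightarrow> (u, v) \<in> A"

definition arc00 :: "('a \<times> 'a) set \<Rightarrow> 'a \<Rightarrow> 'a \<Rightarrow> bool" where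
  "arc00 A u v \<longleftrightarrow> (u, v) \<notin> A \<and> (v, u) \<notin> A"

definition weakly_reach2 :: "'a set \<Rightarrow> ('a \<times> 'a) set \<Rightarrow> 'a \<Rightarrow> 'a \<Rightarrow> bool" where
  "weakly_reach2 V A u v \<longleftrightarrow> arc10 A u v \<or> arc00 A u v \<or>
     (\<exists>w\<in>V. (arc10 A u w \<and> arc10 A w v) \<or> (arc10 A u w \<and> arc00 A w v)
            \<or> (arc00 A u w \<and> arc10 A w v))"

definition weak_king :: "'a set \<Rightarrow> ('a \<times> 'a) set \<Rightarrow> 'a \<Rightarrow> bool" where
  "weak_king V A u \<longleftrightarrow> u \<in> V \<and> (\<forall>v\<in>V. v \<noteq> u \<longrightarrow> weakly_reach2 V A u v)"

end

theory Submission
  imports Defs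
begin

text \<open>Attach to every vertex \<open>y\<close> a new sink \<open>y'\<close> that receives an arc from every old vertex
  except \<open>y\<close>. An old vertex \<open>x\<close> is a weak king: it is non-adjacent to \<open>x'\<close>, beats every other
  \<open>y'\<close>, and reaches an old \<open>y \<noteq> x\<close> along \<open>x \<rightarrow> y'\<close>, \<open>y'\<close> non-adjacent to \<open>y\<close>. A new sink \<open>y'\<close>
  has no out-arcs and is adjacent to all old vertices but \<open>y\<close>, so it weakly reaches an old
  vertex \<open>z\<close> only through \<open>y\<close>, i.e. only if \<open>y \<rightarrow> z\<close>; an in-neighbour \<open>z\<close> of \<open>y\<close>, which exists
  because \<open>y\<close> is not a transmitter, is therefore out of reach.\<close>

lemma weakly_reach2_from_sink:
  assumes "\<forall>w. (u, w) \<notin> A"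
  shows "weakly_reach2 V A u v \<longleftrightarrow> arc00 A u v \<or> (\<exists>w\<in>V. arc00 A u w \<and> arc10 A w v)"
  using assms unfolding weakly_reach2_def arc10_def by auto

definition sink_extension_vertices :: "('a \<Rightarrow> 'b) \<Rightarrow> 'a set \<Rightarrow> ('a + 'b) set" where
  "sink_extension_vertices f V = Inl ` V \<union> Inr ` f ` V"

definition sink_extension_arcs ::
    "('a \<Rightarrow> 'b) \<Rightarrow> 'a set \<Rightarrow> ('a \<times> 'a) set \<Rightarrow> (('a + 'b) \<times> ('a + 'b)) set" where
  "sink_extension_arcs f V A =
     {(Inl x, Inl y) | x y. (x, y) \<in> A} \<union> {(Inl x, Inr (f y)) | x y. x \<in> V \<and> y \<in> V \<and> x \<noteq> y}"

lemma oriented_graph_sink_extension: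
  assumes "oriented_graph V A"
  shows "oriented_graph (sink_extension_vertices f V) (sink_extension_arcs f V A)"
  using assms unfolding oriented_graph_def sink_extension_vertices_def sink_extension_arcs_def
  by blast

lemma sink_extension_arcs_Inl_Inl:
  "(Inl x, Inl y) \<in> sink_extension_arcs f V A \<longleftrightarrow> (x, y) \<in> A"
  unfolding sink_extension_arcs_def by auto

lemma sink_extension_arcs_Inl_Inr:
  assumes "inj_on f V" "x \<in> V" "y \<in> V"
  shows "(Inl x, Inr (f y)) \<in> sink_extension_arcs f V A \<longleftrightarrow> x \<noteq> y"
  using assms unfolding sink_extension_arcs_def by (auto dest: inj_onD)

lemma sink_extension_no_arc_from_Inr [simp]:
  "(Inr b, w) \<notin> sink_extension_arcs f V A"
  unfolding sink_extension_arcs_def by auto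

lemma weak_king_sink_extension_Inl:
  assumes "inj_on f V" and x: "x \<in> V"
  shows "weak_king (sink_extension_vertices f V) (sink_extension_arcs f V A) (Inl x)"
  unfolding weak_king_def
proof (intro conjI ballI impI)
  let ?V2 = "sink_extension_vertices f V" and ?A2 = "sink_extension_arcs f V A"
  show "Inl x \<in> ?V2"
    using x unfolding sink_extension_vertices_def by auto
  fix v assume "v \<in> ?V2" "v \<noteq> Inl x"
  then consider (old) y where "y \<in> V" "y \<noteq> x" "v = Inl y" | (new) y where "y \<in> V" "v = Inr (f y)"
    unfolding sink_extension_vertices_def by auto
  then show "weakly_reach2 ?V2 ?A2 (Inl x) v"
  proof cases
    case old
    have "Inr (f y) \<in> ?V2"
      using old unfolding sink_extension_vertices_def by auto
    moreover have "arc10 ?A2 (Inl x) (Inr (f y))" "arc00 ?A2 (Inr (f y)) (Inl y)"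
      using old x by (simp_all add: arc10_def arc00_def sink_extension_arcs_Inl_Inr[OF assms(1)])
    ultimately show ?thesis
      unfolding weakly_reach2_def using old by blast
  next
    case new
    then have "arc10 ?A2 (Inl x) v \<or> arc00 ?A2 (Inl x) v"
      using x by (auto simp: arc10_def arc00_def sink_extension_arcs_Inl_Inr[OF assms(1)])
    then show ?thesis
      unfolding weakly_reach2_def by blast
  qed
qed

lemma not_weak_king_sink_extension_Inr:
  assumes "oriented_graph V A" "inj_on f V" and y: "y \<in> V" "\<not> transmitter V A y"
  shows "\<not> weak_king (sink_extension_vertices f V) (sink_extension_arcs f V A) (Inr (f y))"
proof
  let ?V2 = "sink_extension_vertices f V" and ?A2 = "sink_extension_arcs f V A"
  assume king: "weak_king ?V2 ?A2 (Inr (f y))"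
  obtain z where z: "z \<in> V" "(z, y) \<in> A"
    using y unfolding transmitter_def by blast
  have "z \<noteq> y" "(y, z) \<notin> A"
    using z assms(1) unfolding oriented_graph_def by auto
  have "Inl z \<in> ?V2"
    using z unfolding sink_extension_vertices_def by auto
  then have "weakly_reach2 ?V2 ?A2 (Inr (f y)) (Inl z)"
    using king unfolding weak_king_def by auto
  moreover have "\<not> arc00 ?A2 (Inr (f y)) (Inl z)"
    using z y \<open>z \<noteq> y\<close> by (simp add: arc00_def sink_extension_arcs_Inl_Inr[OF assms(2)])
  moreover have "\<forall>w. (Inr (f y), w) \<notin> ?A2"
    by simp
  ultimately obtain w where w: "w \<in> ?V2" "arc00 ?A2 (Inr (f y)) w" "arc10 ?A2 w (Inl z)"
    using weakly_reach2_from_sink by metis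
  then obtain x where x: "x \<in> V" "w = Inl x"
    unfolding sink_extension_vertices_def arc10_def by auto
  with w(2) y have "x = y"
    by (simp add: arc00_def sink_extension_arcs_Inl_Inr[OF assms(2)])
  with w(3) x \<open>(y, z) \<notin> A\<close> show False
    by (simp add: arc10_def sink_extension_arcs_Inl_Inl)
qed

theorem theorem10:
  fixes V :: "'a set" and A :: "('a \<times> 'a) set"
  assumes "oriented_graph V A"
    and "\<forall>v\<in>V. \<not> transmitter V A v"
  shows "\<exists>(V2 :: ('a + nat) set) A2.
           oriented_graph V2 A2
         \<and> Inl ` V \<subseteq> V2
         \<and> (\<forall>x\<in>V. \<forall>y\<in>V. (Inl x, Inl y) \<in> A2 \<longleftrightarrow> (x, y) \<in> A)
         \<and> {u \<in> V2. weak_king V2 A2 u} = Inl ` V"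
proof -
  obtain f :: "'a \<Rightarrow> nat" where f: "inj_on f V"
    using assms(1) finite_imp_inj_to_nat_seg[of V] unfolding oriented_graph_def by auto
  let ?V2 = "sink_extension_vertices f V" and ?A2 = "sink_extension_arcs f V A"
  have "{u \<in> ?V2. weak_king ?V2 ?A2 u} = Inl ` V"
  proof
    show "{u \<in> ?V2. weak_king ?V2 ?A2 u} \<subseteq> Inl ` V"
      using not_weak_king_sink_extension_Inr[OF assms(1) f] assms(2)
      by (auto simp: sink_extension_vertices_def)
    show "Inl ` V \<subseteq> {u \<in> ?V2. weak_king ?V2 ?A2 u}"
      using weak_king_sink_extension_Inl[OF f] by (auto simp: weak_king_def)
  qed
  moreover have "Inl ` V \<subseteq> ?V2"
    by (simp add: sink_extension_vertices_def)
  ultimately show ?thesis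
    using oriented_graph_sink_extension[OF assms(1), of f] sink_extension_arcs_Inl_Inl[of _ _ f V A]
    by blast
qed

end
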